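(* Let $n\ge3$ and let $\mathcal F$ be a non-empty simplicial complex on the vertex set $[n]=\{1,\dots,n\}$ of dimension $n-3$, each of whose facets is of the form $[n]\setminus\{i,i+1\}$ for some $i$. Assume moreover that whenever $[n]\setminus\{i,i+1\}$ is a facet of $\mathcal F$, neither $[n]\setminus\{i+1,i+2\}$ nor $[n]\setminus\{i+2,i+3\}$ is a facet of $\mathcal F$. Then $\mathcal F$ has trivial (reduced) homology groups. *)

theory Defs
  imports "HOL-Homology.Homology"
begin

definition simplicial_complex_on :: "nat set \<Rightarrow> nat set set \<Rightarrow> bool" where
  "simplicial_complex_on V F \<longleftrightarrow>
     (\<forall>\<sigma>\<in>F. \<sigma> \<subseteq> V) \<and> (\<forall>\<sigma>\<in>F. \<forall>\<tau>. \<tau> \<subseteq> \<sigma> \<longrightarrow> \<tau> \<in> F)"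

definition facet :: "nat set set \<Rightarrow> nat set \<Rightarrow> bool" where
  "facet F \<sigma> \<longleftrightarrow> \<sigma> \<in> F \<and> (\<forall>\<tau>\<in>F. \<sigma> \<subseteq> \<tau> \<longrightarrow> \<tau> = \<sigma>)"

text \<open>Cyclic index reduction into {1..n}: k is read modulo n.\<close>
definition cyc :: "nat \<Rightarrow> nat \<Rightarrow> nat" where
  "cyc n k = (k + n - 1) mod n + 1"

definition gap :: "nat \<Rightarrow> nat \<Rightarrow> nat set" where
  "gap n i = {1..n} - {cyc n i, cyc n (i + 1)}"

text \<open>Geometric realization of a finite abstract simplicial complex with vertices in nat,
  as a subset of nat \<Rightarrow> real (barycentric coordinates), with the product topology.\<close>
definition geom_realization :: "nat set set \<Rightarrow> (nat \<Rightarrow> real) set" where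
  "geom_realization F = (\<Union>\<sigma>\<in>F - {{}}.
      {x. (\<forall>i. 0 \<le> x i) \<and> (\<forall>i. i \<notin> \<sigma> \<longrightarrow> x i = 0) \<and> sum x \<sigma> = 1})"

definition realization_top :: "nat set set \<Rightarrow> (nat \<Rightarrow> real) topology" where
  "realization_top F = subtopology (powertop_real UNIV) (geom_realization F)"

end

theory Submission
  imports Defs "HOL-Number_Theory.Cong"
begin

text \<open>Pick a facet [n] - {i, i+1}. The vertex i+2 can only be missing from the
  facets [n] - {i+1, i+2} and [n] - {i+2, i+3}, which are excluded by hypothesis;
  so it lies in every facet, the complex is a cone with apex i+2, and the straight-line
  homotopy to the apex contracts its realization.\<close>

lemma geom_realization_segment_to_apex:
  assumes fin: "\<forall>\<sigma>\<in>F. finite \<sigma>" and cone: "\<forall>\<sigma>\<in>F. insert v \<sigma> \<in> F"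
    and t: "t \<in> {0..1}" and x: "x \<in> geom_realization F"
  shows "(\<lambda>k. (1 - t) * x k + t * (if k = v then 1 else 0)) \<in> geom_realization F"
proof -
  define y where "y = (\<lambda>k. (1 - t) * x k + t * (if k = v then 1 else 0))"
  from x obtain \<sigma> where \<sigma>: "\<sigma> \<in> F" "\<sigma> \<noteq> {}" and x_nonneg: "\<forall>i. 0 \<le> x i"
    and x_supp: "\<forall>i. i \<notin> \<sigma> \<longrightarrow> x i = 0" and x_sum: "sum x \<sigma> = 1"
    unfolding geom_realization_def by blast
  let ?\<tau> = "insert v \<sigma>"
  have \<tau>: "?\<tau> \<in> F" "finite ?\<tau>" using cone fin \<sigma> by auto
  have "sum x ?\<tau> = 1"
    using x_sum x_supp fin \<sigma> by (cases "v \<in> \<sigma>") (auto simp: insert_absorb)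
  then have "sum y ?\<tau> = 1"
    using \<tau>(2) by (simp add: y_def sum.distrib flip: sum_distrib_left)
  moreover have "\<forall>i. 0 \<le> y i" using t x_nonneg by (auto simp: y_def)
  moreover have "\<forall>i. i \<notin> ?\<tau> \<longrightarrow> y i = 0" using x_supp by (auto simp: y_def)
  ultimately show ?thesis using \<tau> unfolding geom_realization_def y_def by blast
qed

lemma contractible_space_realization_cone:
  assumes fin: "\<forall>\<sigma>\<in>F. finite \<sigma>" and cone: "\<forall>\<sigma>\<in>F. insert v \<sigma> \<in> F"
  shows "contractible_space (realization_top F)"
proof -
  define e :: "nat \<Rightarrow> real" where "e = (\<lambda>k. if k = v then 1 else 0)"
  define h :: "real \<times> (nat \<Rightarrow> real) \<Rightarrow> (nat \<Rightarrow> real)"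
    where "h = (\<lambda>(t,x) k. (1 - t) * x k + t * e k)"
  let ?X = "prod_topology (top_of_set {0..1::real}) (realization_top F)"
  have fst_cont: "continuous_map ?X euclideanreal fst"
    using continuous_map_fst continuous_map_in_subtopology by metis
  have coord_cont: "continuous_map ?X euclideanreal (\<lambda>p. snd p k)" for k
    unfolding realization_top_def
    by (intro continuous_map_compose[OF continuous_map_snd, unfolded o_def]
        continuous_map_from_subtopology continuous_map_product_projection) simp
  have "continuous_map ?X (powertop_real UNIV) h"
    unfolding continuous_map_componentwise_UNIV h_def case_prod_unfold
    by (intro allI continuous_map_add continuous_map_real_mult continuous_map_diff
        fst_cont coord_cont) auto
  moreover have "h \<in> topspace ?X \<rightarrow> geom_realization F"
  proof
    fix p assume "p \<in> topspace ?X"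
    then have "fst p \<in> {0..1}" "snd p \<in> geom_realization F"
      by (auto simp: realization_top_def)
    from geom_realization_segment_to_apex[OF fin cone this]
    show "h p \<in> geom_realization F" by (simp add: h_def e_def case_prod_unfold)
  qed
  ultimately have "continuous_map ?X (realization_top F) h"
    unfolding realization_top_def by (rule continuous_map_into_subtopology)
  then have "homotopic_with (\<lambda>x. True) (realization_top F) (realization_top F) id (\<lambda>x. e)"
    unfolding homotopic_with_def by (intro exI[of _ h]) (auto simp: h_def)
  then show ?thesis unfolding contractible_space_def by blast
qed

lemma cyc_eq_iff: "0 < n \<Longrightarrow> cyc n a = cyc n b \<longleftrightarrow> a mod n = b mod n"
proof -
  assume n: "0 < n"
  have "(a + n - 1) mod n = (b + n - 1) mod n \<longleftrightarrow> (a + (n - 1)) mod n = (b + (n - 1)) mod n"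
    using n by simp
  also have "\<dots> \<longleftrightarrow> a mod n = b mod n"
    using cong_add_rcancel_nat[of a "n - 1" b n] by (simp add: cong_def)
  finally show ?thesis by (simp add: cyc_def)
qed

lemma cyc_in_range: "0 < n \<Longrightarrow> cyc n k \<in> {1..n}"
  unfolding cyc_def by (simp add: Suc_leI)

lemma gap_mod_cong: "0 < n \<Longrightarrow> a mod n = b mod n \<Longrightarrow> gap n a = gap n b"
  unfolding gap_def using cyc_eq_iff[of n a b] cyc_eq_iff[of n "a+1" "b+1"]
  by (metis mod_Suc_eq Suc_eq_plus1)

lemma cyc_in_gap:
  assumes n: "0 < n"
    and "gap n j \<noteq> gap n (i + 1)" and "gap n j \<noteq> gap n (i + 2)"
  shows "cyc n (i + 2) \<in> gap n j"
proof -
  have "cyc n (i + 2) \<noteq> cyc n j"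
    using assms(3) gap_mod_cong[OF n] cyc_eq_iff[OF n] by metis
  moreover have "cyc n (i + 2) \<noteq> cyc n (j + 1)"
  proof
    assume "cyc n (i + 2) = cyc n (j + 1)"
    then have "(j + 1) mod n = (i + 1 + 1) mod n"
      using cyc_eq_iff[OF n] by (metis add.assoc one_add_one)
    then have "j mod n = (i + 1) mod n"
      using cong_add_rcancel_nat[of j 1 "i + 1" n] by (simp add: cong_def)
    then show False using assms(2) gap_mod_cong[OF n] by blast
  qed
  ultimately show ?thesis using cyc_in_range[OF n] unfolding gap_def by auto
qed

lemma simplicial_complex_face_in_facet:
  assumes "simplicial_complex_on V F" "finite V" "\<sigma> \<in> F"
  shows "\<exists>\<tau>. facet F \<tau> \<and> \<sigma> \<subseteq> \<tau>"
proof -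
  have "F \<subseteq> Pow V"
    using assms(1) unfolding simplicial_complex_on_def by blast
  then have "finite F"
    using assms(2) by (simp add: finite_subset)
  then obtain \<tau> where "\<tau> \<in> F" "\<sigma> \<subseteq> \<tau>" "\<forall>\<rho>\<in>F. \<tau> \<subseteq> \<rho> \<longrightarrow> \<tau> = \<rho>"
    using finite_has_maximal2[OF _ assms(3)] by blast
  then show ?thesis unfolding facet_def by blast
qed

lemma simplicial_complex_cone_of_vertex_in_all_facets:
  assumes "simplicial_complex_on V F" "finite V"
    and apex: "\<And>\<tau>. facet F \<tau> \<Longrightarrow> v \<in> \<tau>"
  shows "\<forall>\<sigma>\<in>F. insert v \<sigma> \<in> F"
proof
  fix \<sigma> assume "\<sigma> \<in> F"
  then obtain \<tau> where \<tau>: "facet F \<tau>" "\<sigma> \<subseteq> \<tau>"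
    using simplicial_complex_face_in_facet[OF assms(1,2)] by blast
  then have "insert v \<sigma> \<subseteq> \<tau>" using apex by blast
  moreover have "\<tau> \<in> F"
    using \<tau>(1) unfolding facet_def by blast
  ultimately show "insert v \<sigma> \<in> F"
    using assms(1) unfolding simplicial_complex_on_def by blast
qed

theorem lemma3p7:
  fixes n :: nat and F :: "nat set set"
  assumes "n \<ge> 3"
    and "simplicial_complex_on {1..n} F"
    and "\<exists>\<sigma>\<in>F. \<sigma> \<noteq> {}"
    and "(\<exists>\<sigma>\<in>F. card \<sigma> = n - 2) \<and> (\<forall>\<sigma>\<in>F. card \<sigma> \<le> n - 2)"
    and "\<forall>\<sigma>. facet F \<sigma> \<longrightarrow> (\<exists>i\<in>{1..n}. \<sigma> = gap n i)"
    and "\<forall>i\<in>{1..n}. facet F (gap n i) \<longrightarrow>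
           \<not> facet F (gap n (i + 1)) \<and> \<not> facet F (gap n (i + 2))"
  shows "\<forall>p::int. trivial_group (reduced_homology_group p (realization_top F))"
proof -
  have n: "0 < n" using assms(1) by simp
  note face_in_facet = simplicial_complex_face_in_facet[OF assms(2) finite_atLeastAtMost]
  obtain \<sigma> where "\<sigma> \<in> F" using assms(3) by blast
  then obtain i where i: "i \<in> {1..n}" "facet F (gap n i)"
    using face_in_facet assms(5) by blast
  have not_facets: "\<not> facet F (gap n (i + 1))" "\<not> facet F (gap n (i + 2))"
    using assms(6) i by blast+
  have apex: "cyc n (i + 2) \<in> \<tau>" if \<tau>: "facet F \<tau>" for \<tau>
  proof -
    obtain j where "\<tau> = gap n j" using assms(5) \<tau> by blast
    moreover have "\<tau> \<noteq> gap n (i + 1)" "\<tau> \<noteq> gap n (i + 2)"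
      using not_facets \<tau> by auto
    ultimately show ?thesis using cyc_in_gap[OF n] by blast
  qed
  have "\<forall>\<sigma>\<in>F. finite \<sigma>"
    using assms(2) unfolding simplicial_complex_on_def by (metis finite_atLeastAtMost finite_subset)
  moreover have "\<forall>\<sigma>\<in>F. insert (cyc n (i + 2)) \<sigma> \<in> F"
    using simplicial_complex_cone_of_vertex_in_all_facets[OF assms(2) finite_atLeastAtMost apex] .
  ultimately have "contractible_space (realization_top F)"
    by (rule contractible_space_realization_cone)
  then show ?thesis
    by (simp add: trivial_reduced_homology_group_contractible_space)
qed

end
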